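(* Let $(q_i)_i$ be probabilities with $\sum_iq_i=1$ and $\mu_i>0$, and let $$f(\alpha)=\inf_{\{\alpha_i\}:\ \alpha_i\in[0,1],\ \sum_iq_i\alpha_i=\alpha}\ \sum_iq_iG_{\mu_i}(\alpha_i).$$ For $\alpha\in(0,1)$, let $\Lambda(\alpha)\in\mathbb{R}$ be defined implicitly by $$1-\alpha=\sum_iq_i\,\Phi\!\left(\frac{\Lambda(\alpha)}{\mu_i}+\frac{\mu_i}{2}\right).$$ Then $$f(\alpha)=\sum_iq_i\,\Phi\!\left(\frac{\Lambda(\alpha)}{\mu_i}-\frac{\mu_i}{2}\right).$$
   Context: $\Phi$ is the standard normal CDF and $G_\mu(\alpha)=\Phi(\Phi^{-1}(1-\alpha)-\mu)$ for $\alpha\in[0,1]$ (the Gaussian trade-off function). *)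

theory Defs
  imports "HOL-Probability.Probability"
begin

definition Phi :: "real \<Rightarrow> real" where
  "Phi x = measure (density lborel std_normal_density) {..x}"

text \<open>Quantile function of the standard normal, meaningful on (0,1).\<close>
definition Phi_inv :: "real \<Rightarrow> real" where
  "Phi_inv y = (THE x. Phi x = y)"

text \<open>Gaussian trade-off function G_mu(alpha) = Phi(Phi_inv(1-alpha) - mu) on [0,1],
  with the endpoint values obtained from Phi_inv(1) = +inf, Phi_inv(0) = -inf.\<close>
definition G :: "real \<Rightarrow> real \<Rightarrow> real" where
  "G mu alpha = (if alpha \<le> 0 then 1 else if alpha \<ge> 1 then 0
                 else Phi (Phi_inv (1 - alpha) - mu))"

end

theory Submission
  imports Defs
begin

(* Lagrangian duality with multiplier exp L. Writing a = 1 - Phi t turns G mu a into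
   Phi (t - mu); since the density satisfies phi (t - mu) = phi t * exp (mu * t - mu^2 / 2), the
   function t \<mapsto> Phi (t - mu) - exp L * Phi t has a derivative with the sign of
   t - (L / mu + mu / 2). So G mu a + exp L * a is minimal at a = 1 - Phi (L / mu + mu / 2).
   Summing these bounds with weights q i, the terms exp L * a i cancel against the constraint
   as soon as the minimisers themselves satisfy it, which is exactly the equation defining L;
   the minimisers then attain the bound. That equation has a unique solution because its
   right-hand side increases strictly from 0 to 1. *)

interpretation std_normal: real_distribution std_normal_distribution
  by (rule real_dist_normal_dist)

lemma Phi_eq_cdf: "Phi = cdf std_normal_distribution"
  by (simp add: fun_eq_iff Phi_def cdf_def)

lemma measure_std_normal_distribution:
  assumes "A \<in> sets borel"
  shows "measure std_normal_distribution A = (LBINT y:A. std_normal_density y)"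
proof -
  have "measure std_normal_distribution A = integral\<^sup>L std_normal_distribution (indicator A)"
    using assms by simp
  also have "\<dots> = integral\<^sup>L lborel (\<lambda>y. std_normal_density y *\<^sub>R indicator A y)"
    by (rule integral_density) (use assms in auto)
  also have "\<dots> = (LBINT y:A. std_normal_density y)"
    by (simp add: set_lebesgue_integral_def mult.commute)
  finally show ?thesis .
qed

lemma Phi_diff_eq_interval_integral:
  assumes "a < b"
  shows "Phi b - Phi a = (LBINT y=a..b. std_normal_density y)"
  using std_normal.cdf_diff_eq[OF assms] assms
  by (simp add: Phi_eq_cdf interval_integral_Ioc measure_std_normal_distribution)

lemma DERIV_Phi: "(Phi has_real_derivative std_normal_density x) (at x)"
proof -
  let ?F = "\<lambda>u. LBINT y=x-1..u. std_normal_density y"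
  have "continuous_on {x-1..x+1} std_normal_density"
    unfolding std_normal_density_def by (intro continuous_intros) auto
  then have "(?F has_vector_derivative std_normal_density x) (at x within {x-1..x+1})"
    by (intro interval_integral_FTC2) auto
  then have "(?F has_vector_derivative std_normal_density x) (at x)"
    by (subst has_vector_derivative_within_open[of _ "{x-1<..<x+1}", symmetric])
       (auto intro: has_vector_derivative_within_subset)
  then have "((\<lambda>u. Phi (x-1) + ?F u) has_real_derivative std_normal_density x) (at x)"
    by (auto simp: has_real_derivative_iff_has_vector_derivative intro!: derivative_eq_intros)
  then show ?thesis
    by (rule has_field_derivative_transform_within_open[of _ _ _ "{x-1<..<x+1}"])
       (auto simp: Phi_diff_eq_interval_integral[symmetric])
qed

lemma isCont_Phi: "isCont Phi x"
  by (rule DERIV_isCont[OF DERIV_Phi])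

lemma continuous_on_Phi [continuous_intros]:
  "continuous_on S f \<Longrightarrow> continuous_on S (\<lambda>x. Phi (f x))"
  by (rule continuous_on_compose2[of UNIV]) (auto intro: continuous_at_imp_continuous_on isCont_Phi)

lemma strict_mono_Phi: "strict_mono Phi"
proof (rule strict_monoI)
  fix x y :: real
  assume "x < y"
  then show "Phi x < Phi y"
    by (rule DERIV_pos_imp_increasing) (use DERIV_Phi normal_density_pos in force)
qed

lemma Phi_tendsto_at_top: "(Phi \<longlongrightarrow> 1) at_top"
  by (simp add: Phi_eq_cdf std_normal.cdf_lim_at_top_prob)

lemma Phi_tendsto_at_bot: "(Phi \<longlongrightarrow> 0) at_bot"
  by (simp add: Phi_eq_cdf std_normal.cdf_lim_at_bot)

lemma Phi_gt_0: "0 < Phi x"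
  using strict_mono_Phi[THEN strict_monoD, of "x - 1" x]
    std_normal.cdf_nonneg[of "x - 1"]
  by (simp add: Phi_eq_cdf)

lemma Phi_less_1: "Phi x < 1"
  using strict_mono_Phi[THEN strict_monoD, of x "x + 1"]
    std_normal.cdf_bounded_prob[of "x + 1"]
  by (simp add: Phi_eq_cdf)

lemma Phi_inv_Phi: "Phi_inv (Phi x) = x"
  unfolding Phi_inv_def using strict_mono_eq[OF strict_mono_Phi] by simp

lemma strict_mono_continuous_ex1_eq:
  fixes F :: "real \<Rightarrow> real"
  assumes mono: "strict_mono F" and cont: "continuous_on UNIV F"
    and "(F \<longlongrightarrow> a) at_bot" "(F \<longlongrightarrow> b) at_top" "a < y" "y < b"
  shows "\<exists>!x. F x = y"
proof (rule ex_ex1I)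
  obtain u where u: "F u < y"
    using order_tendstoD(2)[OF \<open>(F \<longlongrightarrow> a) at_bot\<close> \<open>a < y\<close>]
    by (auto simp: eventually_at_bot_linorder)
  obtain v where v: "y < F v"
    using order_tendstoD(1)[OF \<open>(F \<longlongrightarrow> b) at_top\<close> \<open>y < b\<close>]
    by (auto simp: eventually_at_top_linorder)
  have "u \<le> v"
    using u v strict_mono_less[OF mono, of u v] by simp
  with u v show "\<exists>x. F x = y"
    using IVT'[of F u y v] continuous_on_subset[OF cont] by force
next
  show "F x = y \<Longrightarrow> F x' = y \<Longrightarrow> x = x'" for x x'
    by (metis mono strict_mono_eq)
qed

lemma Phi_surj: "0 < y \<Longrightarrow> y < 1 \<Longrightarrow> \<exists>x. Phi x = y"
  using strict_mono_continuous_ex1_eq[OF strict_mono_Phi _ Phi_tendsto_at_bot Phi_tendsto_at_top]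
    continuous_at_imp_continuous_on[OF ballI[OF isCont_Phi]]
  by blast

lemma G_one_minus_Phi: "G mu (1 - Phi t) = Phi (t - mu)"
  unfolding G_def using Phi_gt_0[of t] Phi_less_1[of t] by (simp add: Phi_inv_Phi)

lemma std_normal_density_shift:
  "std_normal_density (t - m) = std_normal_density t * exp (m * t - m\<^sup>2 / 2)"
proof -
  have "- ((t - m)\<^sup>2) / 2 = - (t\<^sup>2) / 2 + (m * t - m\<^sup>2 / 2)"
    by (simp add: power2_eq_square field_simps)
  then show ?thesis
    by (simp add: std_normal_density_def exp_add[symmetric])
qed

lemma DERIV_sign_change_imp_min:
  fixes h h' :: "real \<Rightarrow> real"
  assumes deriv: "\<And>t. (h has_real_derivative h' t) (at t)"
    and "\<And>t. t < t0 \<Longrightarrow> h' t \<le> 0" and "\<And>t. t0 < t \<Longrightarrow> 0 \<le> h' t"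
  shows "h t0 \<le> h t"
proof -
  have cont: "continuous_on S h" for S
    by (meson deriv DERIV_isCont continuous_at_imp_continuous_on)
  show ?thesis
  proof (cases "t0 \<le> t")
    case True
    then show ?thesis
      by (rule DERIV_nonneg_imp_increasing_open[OF _ _ cont]) (use assms in auto)
  next
    case False
    then show ?thesis
      by (intro DERIV_nonpos_imp_decreasing_open[OF _ _ cont]) (use assms in auto)
  qed
qed

lemma Phi_shift_minus_exp_Phi_min:
  assumes "m > 0"
  shows "Phi (L / m - m / 2) - exp L * Phi (L / m + m / 2) \<le> Phi (t - m) - exp L * Phi t"
proof -
  define t0 where "t0 = L / m + m / 2"
  have deriv: "((\<lambda>t. Phi (t - m) - exp L * Phi t) has_real_derivative
          std_normal_density t * (exp (m * t - m\<^sup>2 / 2) - exp L)) (at t)" for t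
    by (auto intro!: derivative_eq_intros DERIV_Phi[THEN DERIV_chain2]
             simp: std_normal_density_shift algebra_simps)
  have lin: "m * t - m\<^sup>2 / 2 - L = m * (t - t0)" for t
    using assms by (simp add: t0_def field_simps power2_eq_square)
  have "exp (m * t - m\<^sup>2 / 2) \<le> exp L" if "t < t0" for t
    using lin[of t] mult_pos_neg[OF assms, of "t - t0"] that by simp
  moreover have "exp L \<le> exp (m * t - m\<^sup>2 / 2)" if "t0 < t" for t
    using lin[of t] mult_pos_pos[OF assms, of "t - t0"] that by simp
  ultimately have "Phi (t0 - m) - exp L * Phi t0 \<le> Phi (t - m) - exp L * Phi t"
    using normal_density_pos[of 1]
    by (intro DERIV_sign_change_imp_min[OF deriv]) (auto intro!: mult_nonneg_nonneg mult_nonneg_nonpos)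
  then show ?thesis
    by (simp add: t0_def)
qed

lemma
  assumes "m > 0"
  shows tendsto_Phi_affine_at_top: "((\<lambda>x. Phi (x / m + c)) \<longlongrightarrow> 1) at_top"
    and tendsto_Phi_affine_at_bot: "((\<lambda>x. Phi (x / m + c)) \<longlongrightarrow> 0) at_bot"
proof -
  have "filterlim (\<lambda>x. x / m + c) at_top at_top"
    unfolding filterlim_at_top eventually_at_top_linorder
  proof
    show "\<exists>N. \<forall>x\<ge>N. Z \<le> x / m + c" for Z
      using assms by (intro exI[of _ "(Z - c) * m"]) (auto simp: field_simps)
  qed
  then show "((\<lambda>x. Phi (x / m + c)) \<longlongrightarrow> 1) at_top"
    by (rule filterlim_compose[OF Phi_tendsto_at_top])
  have "filterlim (\<lambda>x. x / m + c) at_bot at_bot"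
    unfolding filterlim_at_bot eventually_at_bot_linorder
  proof
    show "\<exists>N. \<forall>x\<le>N. x / m + c \<le> Z" for Z
      using assms by (intro exI[of _ "(Z - c) * m"]) (auto simp: field_simps)
  qed
  then show "((\<lambda>x. Phi (x / m + c)) \<longlongrightarrow> 0) at_bot"
    by (rule filterlim_compose[OF Phi_tendsto_at_bot])
qed

lemma G_ge_tangent:
  assumes "m > 0" "0 \<le> a" "a \<le> 1"
  shows "Phi (L / m - m / 2) - exp L * (a - (1 - Phi (L / m + m / 2))) \<le> G m a"
proof -
  let ?c = "Phi (L / m - m / 2) - exp L * Phi (L / m + m / 2)"
  let ?h = "\<lambda>t. Phi (t - m) - exp L * Phi t"
  have min: "?c \<le> ?h t" for t
    by (rule Phi_shift_minus_exp_Phi_min[OF \<open>m > 0\<close>])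
  have "?c \<le> G m a - exp L * (1 - a)"
  proof -
    consider "a = 0" | "a = 1" | "0 < a" "a < 1"
      using assms by linarith
    then show ?thesis
    proof cases
      case 1 \<comment> \<open>a = 0 corresponds to t \<rightarrow> \<infinity>, and a = 1 to t \<rightarrow> -\<infinity>\<close>
      have "(?h \<longlongrightarrow> 1 - exp L * 1) at_top"
        using tendsto_Phi_affine_at_top[of 1 "- m"]
        by (intro tendsto_intros Phi_tendsto_at_top) simp_all
      then have "?c \<le> 1 - exp L * 1"
        by (rule tendsto_lowerbound) (use min in \<open>auto intro: always_eventually\<close>)
      then show ?thesis
        using 1 by (simp add: G_def)
    next
      case 2
      have "(?h \<longlongrightarrow> 0 - exp L * 0) at_bot"
        using tendsto_Phi_affine_at_bot[of 1 "- m"]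
        by (intro tendsto_intros Phi_tendsto_at_bot) simp_all
      then have "?c \<le> 0 - exp L * 0"
        by (rule tendsto_lowerbound) (use min in \<open>auto intro: always_eventually\<close>)
      then show ?thesis
        using 2 by (simp add: G_def)
    next
      case 3
      then obtain t where "Phi t = 1 - a"
        using Phi_surj[of "1 - a"] by auto
      with min[of t] show ?thesis
        by (simp add: G_one_minus_Phi[of m t, symmetric])
    qed
  qed
  then show ?thesis
    by (simp add: algebra_simps)
qed

lemma Inf_sum_G_eq:
  fixes q mu :: "'i \<Rightarrow> real"
  assumes q: "\<And>i. i \<in> I \<Longrightarrow> q i \<ge> 0" and mu: "\<And>i. i \<in> I \<Longrightarrow> mu i > 0"
    and constraint: "(\<Sum>i\<in>I. q i * (1 - Phi (L / mu i + mu i / 2))) = alpha"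
  shows "Inf {\<Sum>i\<in>I. q i * G (mu i) (a i) | a.
                (\<forall>i\<in>I. 0 \<le> a i \<and> a i \<le> 1) \<and> (\<Sum>i\<in>I. q i * a i) = alpha}
         = (\<Sum>i\<in>I. q i * Phi (L / mu i - mu i / 2))"
proof (rule cInf_eq_minimum)
  define a0 where "a0 i = 1 - Phi (L / mu i + mu i / 2)" for i
  have "G (mu i) (a0 i) = Phi (L / mu i - mu i / 2)" for i
    by (simp add: a0_def G_one_minus_Phi)
  then show "(\<Sum>i\<in>I. q i * Phi (L / mu i - mu i / 2)) \<in> {\<Sum>i\<in>I. q i * G (mu i) (a i) | a.
                (\<forall>i\<in>I. 0 \<le> a i \<and> a i \<le> 1) \<and> (\<Sum>i\<in>I. q i * a i) = alpha}"
    using constraint Phi_gt_0 Phi_less_1 by (intro CollectI exI[of _ a0]) (auto simp: a0_def less_imp_le)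
next
  fix x
  assume "x \<in> {\<Sum>i\<in>I. q i * G (mu i) (a i) | a.
                (\<forall>i\<in>I. 0 \<le> a i \<and> a i \<le> 1) \<and> (\<Sum>i\<in>I. q i * a i) = alpha}"
  then obtain a where a01: "\<forall>i\<in>I. 0 \<le> a i \<and> a i \<le> 1" and a: "(\<Sum>i\<in>I. q i * a i) = alpha"
    and x: "x = (\<Sum>i\<in>I. q i * G (mu i) (a i))"
    by blast
  have "(\<Sum>i\<in>I. q i * Phi (L / mu i - mu i / 2))
        = (\<Sum>i\<in>I. q i * (Phi (L / mu i - mu i / 2) - exp L * (a i - (1 - Phi (L / mu i + mu i / 2)))))"
    using a constraint by (simp add: algebra_simps sum_subtractf sum.distrib sum_distrib_left[symmetric])
  also have "\<dots> \<le> x"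
    unfolding x using a01 q mu by (intro sum_mono mult_left_mono G_ge_tangent) auto
  finally show "(\<Sum>i\<in>I. q i * Phi (L / mu i - mu i / 2)) \<le> x" .
qed

lemma sum_Phi_affine_ex1:
  fixes q mu :: "'i \<Rightarrow> real"
  assumes "finite I" and q: "\<And>i. i \<in> I \<Longrightarrow> q i \<ge> 0" and "(\<Sum>i\<in>I. q i) = 1"
    and mu: "\<And>i. i \<in> I \<Longrightarrow> mu i > 0" and "0 < y" "y < 1"
  shows "\<exists>!L. (\<Sum>i\<in>I. q i * Phi (L / mu i + mu i / 2)) = y"
proof (rule strict_mono_continuous_ex1_eq[where a = 0 and b = 1])
  obtain j where "j \<in> I" "q j \<noteq> 0"
    using \<open>(\<Sum>i\<in>I. q i) = 1\<close> by (metis sum.neutral zero_neq_one)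
  with q have j: "j \<in> I" "q j > 0"
    by force+
  show "strict_mono (\<lambda>L. \<Sum>i\<in>I. q i * Phi (L / mu i + mu i / 2))"
  proof (rule strict_monoI)
    fix x y :: real
    assume "x < y"
    then have less: "Phi (x / mu i + mu i / 2) < Phi (y / mu i + mu i / 2)" if "i \<in> I" for i
      using mu[OF that] by (intro strict_mono_Phi[THEN strict_monoD]) (simp add: divide_strict_right_mono)
    show "(\<Sum>i\<in>I. q i * Phi (x / mu i + mu i / 2)) < (\<Sum>i\<in>I. q i * Phi (y / mu i + mu i / 2))"
    proof (rule sum_strict_mono_ex1[OF \<open>finite I\<close>])
      show "\<forall>i\<in>I. q i * Phi (x / mu i + mu i / 2) \<le> q i * Phi (y / mu i + mu i / 2)"
        using less q by (auto intro: mult_left_mono less_imp_le)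
      show "\<exists>i\<in>I. q i * Phi (x / mu i + mu i / 2) < q i * Phi (y / mu i + mu i / 2)"
        using less[OF j(1)] j by (intro bexI[OF _ j(1)]) simp
    qed
  qed
  show "continuous_on UNIV (\<lambda>L. \<Sum>i\<in>I. q i * Phi (L / mu i + mu i / 2))"
    using mu by (intro continuous_intros) (auto simp: less_imp_neq[symmetric])
  have "((\<lambda>L. \<Sum>i\<in>I. q i * Phi (L / mu i + mu i / 2)) \<longlongrightarrow> (\<Sum>i\<in>I. q i * 0)) at_bot"
    using mu by (intro tendsto_intros tendsto_Phi_affine_at_bot)
  then show "((\<lambda>L. \<Sum>i\<in>I. q i * Phi (L / mu i + mu i / 2)) \<longlongrightarrow> 0) at_bot"
    by simp
  have "((\<lambda>L. \<Sum>i\<in>I. q i * Phi (L / mu i + mu i / 2)) \<longlongrightarrow> (\<Sum>i\<in>I. q i * 1)) at_top"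
    using mu by (intro tendsto_intros tendsto_Phi_affine_at_top)
  then show "((\<lambda>L. \<Sum>i\<in>I. q i * Phi (L / mu i + mu i / 2)) \<longlongrightarrow> 1) at_top"
    using \<open>(\<Sum>i\<in>I. q i) = 1\<close> by simp
qed (use \<open>0 < y\<close> \<open>y < 1\<close> in auto)

theorem lemma5:
  fixes I :: "'i set" and q mu :: "'i \<Rightarrow> real" and alpha :: real
  assumes "finite I"
    and "\<And>i. i \<in> I \<Longrightarrow> q i \<ge> 0"
    and "(\<Sum>i\<in>I. q i) = 1"
    and "\<And>i. i \<in> I \<Longrightarrow> mu i > 0"
    and "0 < alpha" and "alpha < 1"
  shows "(\<exists>!L. 1 - alpha = (\<Sum>i\<in>I. q i * Phi (L / mu i + mu i / 2)))
       \<and> (\<forall>L. 1 - alpha = (\<Sum>i\<in>I. q i * Phi (L / mu i + mu i / 2)) \<longrightarrow>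
            Inf {\<Sum>i\<in>I. q i * G (mu i) (a i) | a.
                   (\<forall>i\<in>I. 0 \<le> a i \<and> a i \<le> 1) \<and> (\<Sum>i\<in>I. q i * a i) = alpha}
            = (\<Sum>i\<in>I. q i * Phi (L / mu i - mu i / 2)))"
proof (intro conjI allI impI)
  show "\<exists>!L. 1 - alpha = (\<Sum>i\<in>I. q i * Phi (L / mu i + mu i / 2))"
    using sum_Phi_affine_ex1[of I q mu "1 - alpha"] assms by (simp only: eq_commute[of "1 - alpha"])
next
  fix L
  assume "1 - alpha = (\<Sum>i\<in>I. q i * Phi (L / mu i + mu i / 2))"
  then have constraint: "(\<Sum>i\<in>I. q i * (1 - Phi (L / mu i + mu i / 2))) = alpha"
    using assms(3) by (simp add: right_diff_distrib sum_subtractf)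
  show "Inf {\<Sum>i\<in>I. q i * G (mu i) (a i) | a.
                   (\<forall>i\<in>I. 0 \<le> a i \<and> a i \<le> 1) \<and> (\<Sum>i\<in>I. q i * a i) = alpha}
            = (\<Sum>i\<in>I. q i * Phi (L / mu i - mu i / 2))"
    by (rule Inf_sum_G_eq[OF _ _ constraint]) (use assms in auto)
qed

end
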